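(* Let $N,M$ be positive integers, let $\mathscr{A}\subset\mathscr{M}(N,M)$ and $\mathscr{B}\subset\mathscr{M}(M,N)$ be finite sets of real matrices, and let $\|\cdot\|$ be a submultiplicative norm on $\mathscr{M}(N,N)$. Suppose that for every sequence $\{A_n\}_{n\ge1}$ with $A_n\in\mathscr{A}$ there exist a positive integer $k$ and matrices $B_1,\ldots,B_k\in\mathscr{B}$ such that $\|A_kB_k\cdots A_1B_1\|<1$. Then there exist constants $C>0$ and $\lambda\in(0,1)$ such that for every sequence $\{A_n\in\mathscr{A}\}$ there is a sequence $\{B_n\in\mathscr{B}\}$ for which \[ \|A_nB_n\cdots A_1B_1\|\le C\lambda^n,\qquad n=1,2,\ldots. \]
   Context: $\mathscr{M}(p,q)$ denotes the space of $p\times q$ real matrices with the topology of elementwise convergence. A norm on $\mathscr{M}(N,N)$ is submultiplicative if $\|XY\|\le\|X\|\,\|Y\|$ for all $X,Y$. *)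

theory Defs
  imports "HOL-Analysis.Analysis"
begin

definition is_matrix_norm :: "(real^'n^'n \<Rightarrow> real) \<Rightarrow> bool" where
  "is_matrix_norm nrm \<longleftrightarrow>
     (\<forall>X. 0 \<le> nrm X) \<and>
     (\<forall>X. nrm X = 0 \<longleftrightarrow> X = 0) \<and>
     (\<forall>c X. nrm (c *\<^sub>R X) = \<bar>c\<bar> * nrm X) \<and>
     (\<forall>X Y. nrm (X + Y) \<le> nrm X + nrm Y)"

definition submultiplicative :: "(real^'n^'n \<Rightarrow> real) \<Rightarrow> bool" where
  "submultiplicative nrm \<longleftrightarrow> (\<forall>X Y. nrm (X ** Y) \<le> nrm X * nrm Y)"

text \<open>prodAB A B k = A_k B_k ... A_1 B_1 (sequences indexed from 1; empty product = identity).\<close>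
fun prodAB :: "(nat \<Rightarrow> real^'m^'n) \<Rightarrow> (nat \<Rightarrow> real^'n^'m) \<Rightarrow> nat \<Rightarrow> real^'n^'n" where
  "prodAB A B 0 = mat 1"
| "prodAB A B (Suc k) = (A (Suc k) ** B (Suc k)) ** prodAB A B k"

end

theory Submission
  imports Defs
begin

text \<open>By a Koenig-type compactness argument (\<open>\<A>\<close> is finite) the lengths \<open>k\<close> in the hypothesis
  are bounded by a single \<open>K\<close>. Only finitely many products of length at most \<open>K\<close> exist, so those
  of norm below 1 have norm at most some \<open>q < 1\<close>, and all have norm at most some \<open>D\<close>. Given
  \<open>A\<close>, choose \<open>B\<close> greedily block after block; each block has length at most \<open>K\<close> and
  contributes a factor of norm at most \<open>q\<close>, so by submultiplicativity the products decay like
  \<open>root K q ^ n\<close>.\<close>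

definition seq_shift :: "(nat \<Rightarrow> 'a) \<Rightarrow> nat \<Rightarrow> nat \<Rightarrow> 'a" where
  "seq_shift A p i = A (p + i)"

lemma prodAB_cong:
  "(\<And>i. i \<in> {1..k} \<Longrightarrow> A i = A' i \<and> B i = B' i) \<Longrightarrow> prodAB A B k = prodAB A' B' k"
  by (induction k) auto

lemma prodAB_add:
  "prodAB A B (p + k) = prodAB (seq_shift A p) (seq_shift B p) k ** prodAB A B p"
  by (induction k) (simp_all add: seq_shift_def matrix_mul_assoc)

lemma finite_prodAB_set:
  assumes "finite SA" "finite SB"
  shows "finite {prodAB A B k | A B k. k \<le> K \<and> (\<forall>i\<in>{1..k}. A i \<in> SA \<and> B i \<in> SB)}"
proof -
  let ?img = "\<lambda>k. (\<lambda>(A, B). prodAB A B k) ` (Pi\<^sub>E {1..k} (\<lambda>_. SA) \<times> Pi\<^sub>E {1..k} (\<lambda>_. SB))"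
  have "prodAB A B k \<in> ?img k" if "\<forall>i\<in>{1..k}. A i \<in> SA \<and> B i \<in> SB" for A B k
  proof -
    have "prodAB A B k = prodAB (restrict A {1..k}) (restrict B {1..k}) k"
      by (rule prodAB_cong) simp
    then show ?thesis using that by force
  qed
  then have "{prodAB A B k | A B k. k \<le> K \<and> (\<forall>i\<in>{1..k}. A i \<in> SA \<and> B i \<in> SB)}
      \<subseteq> (\<Union>k\<le>K. ?img k)"
    by auto
  moreover have "finite (\<Union>k\<le>K. ?img k)"
    using assms by (simp add: finite_PiE)
  ultimately show ?thesis by (rule finite_subset)
qed

lemma koenig_uniform_bound:
  fixes S :: "'a set" and G :: "(nat \<Rightarrow> 'a) \<Rightarrow> nat \<Rightarrow> bool"
  assumes "finite S"
    and local: "\<And>A A' k. (\<And>i. i \<in> {1..k} \<Longrightarrow> A i = A' i) \<Longrightarrow> G A k \<Longrightarrow> G A' k"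
    and witness: "\<And>A. \<forall>n\<ge>1. A n \<in> S \<Longrightarrow> \<exists>k\<ge>1. G A k"
  shows "\<exists>K. \<forall>A. (\<forall>n\<ge>1. A n \<in> S) \<longrightarrow> (\<exists>k\<in>{1..K}. G A k)"
proof (rule ccontr)
  assume no_bound: "\<not> ?thesis"
  \<comment> \<open>A bad prefix extends to counterexamples of every depth. Since \<open>S\<close> is finite, a bad prefix
    has a bad one-step extension, and the limit branch contradicts the hypothesis.\<close>
  define bad where "bad n w \<longleftrightarrow> (\<forall>K. \<exists>A. (\<forall>m\<ge>1. A m \<in> S) \<and> (\<forall>i\<in>{1..n}. A i = w i)
      \<and> (\<forall>k\<in>{1..K}. \<not> G A k))" for n w
  have bad_0: "bad 0 w" for w
    using no_bound unfolding bad_def by auto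
  have bad_Suc: "\<exists>a\<in>S. bad (Suc n) (w(Suc n := a))" if "bad n w" for n w
  proof (rule ccontr)
    assume none: "\<not> ?thesis"
    have "\<exists>K. \<forall>A. (\<forall>n\<ge>1. A n \<in> S) \<longrightarrow> (\<forall>i\<in>{1..Suc n}. A i = (w(Suc n := a)) i)
        \<longrightarrow> (\<exists>k\<in>{1..K}. G A k)" if "a \<in> S" for a
    proof -
      have "\<not> bad (Suc n) (w(Suc n := a))"
        using none that by blast
      then show ?thesis
        unfolding bad_def by blast
    qed
    then obtain Ka where Ka: "\<And>a A. a \<in> S \<Longrightarrow> \<forall>n\<ge>1. A n \<in> S \<Longrightarrow>
        \<forall>i\<in>{1..Suc n}. A i = (w(Suc n := a)) i \<Longrightarrow> \<exists>k\<in>{1..Ka a}. G A k"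
      by metis
    from \<open>bad n w\<close> obtain A where A: "\<forall>n\<ge>1. A n \<in> S" "\<forall>i\<in>{1..n}. A i = w i"
      and no_G: "\<forall>k\<in>{1..sum Ka S}. \<not> G A k"
      unfolding bad_def by blast
    have "A (Suc n) \<in> S" using A(1) by simp
    moreover have "\<forall>i\<in>{1..Suc n}. A i = (w(Suc n := A (Suc n))) i"
      using A(2) by (auto simp: le_Suc_eq)
    ultimately obtain k where "k \<in> {1..Ka (A (Suc n))}" "G A k"
      using Ka A(1) by blast
    moreover have "Ka (A (Suc n)) \<le> sum Ka S"
      using \<open>finite S\<close> \<open>A (Suc n) \<in> S\<close> by (intro member_le_sum) auto
    ultimately show False using no_G by auto
  qed
  have "\<exists>w'. bad (Suc n) w' \<and> (\<forall>i\<le>n. w' i = w i)" if "bad n w" for n w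
    using bad_Suc[OF that] by force
  then obtain W where W: "\<And>n. bad n (W n)" and extends: "\<And>n i. i \<le> n \<Longrightarrow> W (Suc n) i = W n i"
    using dependent_nat_choice[of bad "\<lambda>n w w'. \<forall>i\<le>n. w' i = w i"] bad_0 by metis
  have stable: "W m i = W i i" if "i \<le> m" for i m
    using that by (induction m rule: dec_induct) (simp_all add: extends)
  define A where "A i = W i i" for i
  have "A n \<in> S" if "n \<ge> 1" for n
  proof -
    obtain A' where "\<forall>n\<ge>1. A' n \<in> S" "\<forall>i\<in>{1..n}. A' i = W n i"
      using W[of n] unfolding bad_def by blast
    then show ?thesis using that by (auto simp: A_def)
  qed
  then obtain k where "k \<ge> 1" "G A k"
    using witness by blast
  obtain A' where A': "\<forall>i\<in>{1..k}. A' i = W k i" "\<forall>k'\<in>{1..k}. \<not> G A' k'"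
    using W[of k] unfolding bad_def by blast
  have "A i = A' i" if "i \<in> {1..k}" for i
    using that A'(1) stable[of i k] by (simp add: A_def)
  then have "G A' k"
    using local \<open>G A k\<close> by blast
  then show False
    using A'(2) \<open>k \<ge> 1\<close> by simp
qed

lemma unique_block_index:
  fixes pos :: "nat \<Rightarrow> nat"
  assumes pos_less: "\<And>j. pos j < pos (Suc j)" and "pos 0 = 0" "0 < n"
  shows "\<exists>!j. pos j < n \<and> n \<le> pos (Suc j)"
proof -
  have mono: "strict_mono pos"
    using pos_less by (simp add: strict_mono_Suc_iff)
  define j where "j = Max {j. pos j < n}"
  have "{j. pos j < n} \<subseteq> {..<n}"
    using strict_mono_imp_increasing[OF mono] by (auto intro: le_less_trans)
  then have fin: "finite {j. pos j < n}"
    by (rule finite_subset) simp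
  have "pos j < n"
  proof -
    have "0 \<in> {j. pos j < n}" using assms(2,3) by simp
    then show ?thesis using Max_in[OF fin] unfolding j_def by blast
  qed
  moreover have "n \<le> pos (Suc j)"
    using Max_ge[OF fin, of "Suc j"] unfolding j_def by fastforce
  moreover have "j' = j" if "pos j' < n" "n \<le> pos (Suc j')" for j'
  proof -
    have "\<not> j' < j" "\<not> j < j'"
      using that \<open>pos j < n\<close> \<open>n \<le> pos (Suc j)\<close> mono
      by (auto simp: Suc_le_eq[symmetric] strict_mono_less_eq dest: order.trans[of _ _ "pos _"])
    then show ?thesis by simp
  qed
  ultimately show ?thesis by blast
qed

lemma concatenate_blocks:
  fixes P :: "nat \<Rightarrow> (nat \<Rightarrow> 'b) \<Rightarrow> nat \<Rightarrow> bool"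
  assumes block: "\<And>p. \<exists>k\<in>{1..K}. \<exists>B. P p B k"
    and local: "\<And>p B B' k. P p B k \<Longrightarrow> \<forall>i\<in>{1..k}. B i = B' i \<Longrightarrow> P p B' k"
  obtains pos B where "pos 0 = 0" "\<And>j. pos j < pos (Suc j)" "\<And>j. pos (Suc j) \<le> pos j + K"
    "\<And>j. P (pos j) (seq_shift B (pos j)) (pos (Suc j) - pos j)"
proof -
  obtain kf Bf where kf: "\<And>p. kf p \<in> {1..K}" and Bf: "\<And>p. P p (Bf p) (kf p)"
    using block by metis
  define pos where "pos = rec_nat 0 (\<lambda>_ p. p + kf p)"
  have pos_0: "pos 0 = 0" and pos_Suc: "\<And>j. pos (Suc j) = pos j + kf (pos j)"
    by (simp_all add: pos_def)
  have pos_less: "pos j < pos (Suc j)" for j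
    using kf[of "pos j"] by (simp add: pos_Suc)
  define J where "J n = (THE j. pos j < n \<and> n \<le> pos (Suc j))" for n
  define B where "B n = Bf (pos (J n)) (n - pos (J n))" for n
  have "seq_shift B (pos j) i = Bf (pos j) i" if "i \<in> {1..kf (pos j)}" for j i
  proof -
    have "J (pos j + i) = j"
      unfolding J_def using that pos_Suc
      by (intro the1_equality unique_block_index pos_less pos_0) auto
    then show ?thesis by (simp add: B_def seq_shift_def)
  qed
  then have blocks: "P (pos j) (seq_shift B (pos j)) (kf (pos j))" for j
    using local[OF Bf] by metis
  show thesis
  proof (rule that)
    show "pos (Suc j) \<le> pos j + K" for j
      using kf[of "pos j"] by (simp add: pos_Suc)
    show "P (pos j) (seq_shift B (pos j)) (pos (Suc j) - pos j)" for j
      using blocks by (simp add: pos_Suc)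
  qed (fact pos_0 pos_less)+
qed

lemma finite_below_one_bounded_away:
  fixes S :: "real set"
  assumes "finite S"
  obtains q where "0 < q" "q < 1" "\<And>x. x \<in> S \<Longrightarrow> x < 1 \<Longrightarrow> x \<le> q"
proof
  let ?q = "Max (insert (1/2) {x \<in> S. x < 1})"
  have fin: "finite (insert (1/2) {x \<in> S. x < 1})"
    using assms by simp
  show "0 < ?q"
    using Max_ge[OF fin, of "1/2"] by simp
  show "?q < 1"
    using fin by (subst Max_less_iff) auto
  show "x \<le> ?q" if "x \<in> S" "x < 1" for x
    using Max_ge[OF fin] that by simp
qed

lemma prodAB_greedy_blocks:
  fixes nrm :: "real^'n^'n \<Rightarrow> real" and \<A> :: "(real^'m^'n) set" and \<B> :: "(real^'n^'m) set"
  assumes block: "\<And>A. \<forall>n\<ge>1. A n \<in> \<A> \<Longrightarrow>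
      \<exists>k\<in>{1..K}. \<exists>B. (\<forall>i\<in>{1..k}. B i \<in> \<B>) \<and> nrm (prodAB A B k) \<le> q"
    and A: "\<forall>n\<ge>1. A n \<in> \<A>"
  obtains pos B where "pos 0 = 0" "\<And>j. pos j < pos (Suc j)" "\<And>j. pos (Suc j) \<le> pos j + K"
    "\<forall>n\<ge>1. B n \<in> \<B>"
    "\<And>j. nrm (prodAB (seq_shift A (pos j)) (seq_shift B (pos j)) (pos (Suc j) - pos j)) \<le> q"
proof -
  define good where "good p B k \<longleftrightarrow> (\<forall>i\<in>{1..k}. B i \<in> \<B>) \<and> nrm (prodAB (seq_shift A p) B k) \<le> q"
    for p B k
  obtain pos B where pos_0: "pos 0 = 0" and pos_less: "\<And>j. pos j < pos (Suc j)"
    and pos_le: "\<And>j. pos (Suc j) \<le> pos j + K"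
    and blocks: "\<And>j. good (pos j) (seq_shift B (pos j)) (pos (Suc j) - pos j)"
  proof (rule concatenate_blocks)
    show "\<exists>k\<in>{1..K}. \<exists>B. good p B k" for p
      unfolding good_def using A by (intro block) (simp add: seq_shift_def)
    show "good p B' k" if "good p B k" "\<forall>i\<in>{1..k}. B i = B' i" for p B B' k
      using that prodAB_cong[of k "seq_shift A p" "seq_shift A p" B B'] by (auto simp: good_def)
  qed (rule that)
  have B_valid: "\<forall>n\<ge>1. B n \<in> \<B>"
  proof (intro allI impI)
    fix n :: nat assume "n \<ge> 1"
    then obtain j where "pos j < n" "n \<le> pos (Suc j)"
      using unique_block_index[OF pos_less pos_0, of n] by auto
    then have "n - pos j \<in> {1..pos (Suc j) - pos j}" by auto
    then have "seq_shift B (pos j) (n - pos j) \<in> \<B>"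
      using blocks[of j] unfolding good_def by blast
    then show "B n \<in> \<B>"
      using \<open>pos j < n\<close> by (simp add: seq_shift_def)
  qed
  show thesis
  proof (rule that)
    show "nrm (prodAB (seq_shift A (pos j)) (seq_shift B (pos j)) (pos (Suc j) - pos j)) \<le> q" for j
      using blocks[of j] by (simp add: good_def)
  qed (fact pos_0 pos_less pos_le B_valid)+
qed

text \<open>Along the block boundaries the norm decays like \<open>q ^ j\<close> with at most \<open>K\<close> factors per
  block; the constant \<open>D * D / q\<close> pays for the empty product and for the unfinished last block.\<close>

lemma prodAB_decay_along_blocks:
  fixes nrm :: "real^'n^'n \<Rightarrow> real"
  assumes nonneg: "\<And>X. 0 \<le> nrm X" and "submultiplicative nrm"
    and "0 < K" "0 < q" "q < 1"
    and pos_0: "pos 0 = 0" and pos_less: "\<And>j. pos j < pos (Suc j)"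
    and pos_le: "\<And>j. pos (Suc j) \<le> pos j + K"
    and blocks: "\<And>j. nrm (prodAB (seq_shift A (pos j)) (seq_shift B (pos j)) (pos (Suc j) - pos j)) \<le> q"
    and short: "\<And>p r. r \<le> K \<Longrightarrow> nrm (prodAB (seq_shift A p) (seq_shift B p) r) \<le> D"
    and "n \<ge> 1"
  shows "nrm (prodAB A B n) \<le> D * D / q * root K q ^ n"
proof -
  have sub: "nrm (X ** Y) \<le> nrm X * nrm Y" for X Y
    using \<open>submultiplicative nrm\<close> unfolding submultiplicative_def by blast
  have "0 \<le> D"
    using nonneg[of "prodAB (seq_shift A 0) (seq_shift B 0) 0"] short[of 0 0] by simp
  have head: "nrm (prodAB A B (pos j)) \<le> D * q ^ j" for j
  proof (induction j)
    case 0
    show ?case using short[of 0 0] pos_0 by simp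
  next
    case (Suc j)
    have "prodAB A B (pos (Suc j))
        = prodAB (seq_shift A (pos j)) (seq_shift B (pos j)) (pos (Suc j) - pos j) ** prodAB A B (pos j)"
      using prodAB_add[of A B "pos j" "pos (Suc j) - pos j"] pos_less[of j] by simp
    also have "nrm \<dots> \<le> q * (D * q ^ j)"
      using order.trans[OF sub mult_mono[OF blocks Suc.IH]] nonneg \<open>0 < q\<close> by simp
    finally show ?case by (simp add: ac_simps)
  qed
  have pos_bound: "pos j \<le> j * K" for j
    by (induction j) (simp_all add: pos_0 order.trans[OF pos_le])
  obtain j where j: "pos j < n" "n \<le> pos (Suc j)"
    using unique_block_index[OF pos_less pos_0, of n] \<open>n \<ge> 1\<close> by auto
  define r where "r = n - pos j"
  have "prodAB A B n = prodAB (seq_shift A (pos j)) (seq_shift B (pos j)) r ** prodAB A B (pos j)"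
    using prodAB_add[of A B "pos j" r] j by (simp add: r_def)
  also have "nrm \<dots> \<le> D * (D * q ^ j)"
  proof (rule order.trans[OF sub mult_mono])
    show "nrm (prodAB (seq_shift A (pos j)) (seq_shift B (pos j)) r) \<le> D"
      using j pos_le[of j] by (intro short) (simp add: r_def)
  qed (use head nonneg \<open>0 \<le> D\<close> in auto)
  also have "\<dots> = D * D / q * q ^ Suc j"
    using \<open>0 < q\<close> by simp
  also have "q ^ Suc j = root K q ^ (Suc j * K)"
    using \<open>0 < K\<close> \<open>0 < q\<close> by (metis mult.commute power_mult real_root_pow_pos)
  also have "D * D / q * root K q ^ (Suc j * K) \<le> D * D / q * root K q ^ n"
  proof (intro mult_left_mono power_decreasing)
    show "n \<le> Suc j * K" using j(2) pos_bound[of "Suc j"] by linarith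
  qed (use \<open>0 < K\<close> \<open>0 < q\<close> \<open>q < 1\<close> \<open>0 \<le> D\<close> in \<open>auto simp: real_root_le_1_iff\<close>)
  finally show ?thesis .
qed

lemma uniform_contracting_blocks:
  fixes \<A> :: "(real^'m^'n) set" and \<B> :: "(real^'n^'m) set" and nrm :: "real^'n^'n \<Rightarrow> real"
  assumes "finite \<A>" "finite \<B>"
    and contracting: "\<forall>A. (\<forall>n\<ge>1. A n \<in> \<A>) \<longrightarrow>
      (\<exists>k\<ge>1. \<exists>B. (\<forall>i\<in>{1..k}. B i \<in> \<B>) \<and> nrm (prodAB A B k) < 1)"
  obtains K q where "0 < K" "0 < q" "q < 1"
    "\<And>A. \<forall>n\<ge>1. A n \<in> \<A> \<Longrightarrow> \<exists>k\<in>{1..K}. \<exists>B. (\<forall>i\<in>{1..k}. B i \<in> \<B>) \<and> nrm (prodAB A B k) \<le> q"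
proof -
  define G where "G A k \<longleftrightarrow> (\<exists>B. (\<forall>i\<in>{1..k}. B i \<in> \<B>) \<and> nrm (prodAB A B k) < 1)" for A k
  have "G A' k" if "\<And>i. i \<in> {1..k} \<Longrightarrow> A i = A' i" "G A k" for A A' k
    using that prodAB_cong[of k A A'] unfolding G_def by metis
  then obtain K0 where K0: "\<And>A. \<forall>n\<ge>1. A n \<in> \<A> \<Longrightarrow> \<exists>k\<in>{1..K0}. G A k"
    using koenig_uniform_bound[OF \<open>finite \<A>\<close>, of G] contracting unfolding G_def by blast
  \<comment> \<open>\<open>K0 = 0\<close> is possible (when \<open>\<A> = {}\<close>), hence the \<open>Suc\<close>.\<close>
  define K where "K = Suc K0"
  define P where "P = {prodAB A B k | A B k. k \<le> K \<and> (\<forall>i\<in>{1..k}. A i \<in> \<A> \<and> B i \<in> \<B>)}"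
  have "finite (nrm ` P)"
    unfolding P_def using finite_prodAB_set[OF assms(1,2)] by blast
  then obtain q where q: "0 < q" "q < 1" "\<And>X. X \<in> P \<Longrightarrow> nrm X < 1 \<Longrightarrow> nrm X \<le> q"
    by (rule finite_below_one_bounded_away) blast
  have "\<exists>k\<in>{1..K}. \<exists>B. (\<forall>i\<in>{1..k}. B i \<in> \<B>) \<and> nrm (prodAB A B k) \<le> q"
    if A: "\<forall>n\<ge>1. A n \<in> \<A>" for A
  proof -
    obtain k B where "k \<in> {1..K0}" "\<forall>i\<in>{1..k}. B i \<in> \<B>" "nrm (prodAB A B k) < 1"
      using K0[OF A] unfolding G_def by blast
    moreover from this have "prodAB A B k \<in> P"
      using A unfolding P_def K_def by fastforce
    ultimately show ?thesis
      using q(3) unfolding K_def by fastforce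
  qed
  with q(1,2) show thesis
    by (intro that[of K q]) (simp_all add: K_def)
qed

lemma prodAB_short_products_bounded:
  fixes \<A> :: "(real^'m^'n) set" and \<B> :: "(real^'n^'m) set" and nrm :: "real^'n^'n \<Rightarrow> real"
  assumes "finite \<A>" "finite \<B>"
  obtains D where "1 \<le> D"
    "\<And>A B k. k \<le> K \<Longrightarrow> \<forall>i\<in>{1..k}. A i \<in> \<A> \<and> B i \<in> \<B> \<Longrightarrow> nrm (prodAB A B k) \<le> D"
proof -
  define P where "P = {prodAB A B k | A B k. k \<le> K \<and> (\<forall>i\<in>{1..k}. A i \<in> \<A> \<and> B i \<in> \<B>)}"
  have "finite (nrm ` P)"
    unfolding P_def using finite_prodAB_set[OF assms] by blast
  then have "1 \<le> Max (insert 1 (nrm ` P))" "\<And>X. X \<in> P \<Longrightarrow> nrm X \<le> Max (insert 1 (nrm ` P))"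
    by simp_all
  then show thesis
    by (intro that) (auto simp: P_def)
qed

lemma prodAB_exponential_decay:
  fixes nrm :: "real^'n^'n \<Rightarrow> real" and \<A> :: "(real^'m^'n) set" and \<B> :: "(real^'n^'m) set"
  assumes nonneg: "\<And>X. 0 \<le> nrm X" and "submultiplicative nrm"
    and "0 < K" "0 < q" "q < 1"
    and block: "\<And>A. \<forall>n\<ge>1. A n \<in> \<A> \<Longrightarrow>
      \<exists>k\<in>{1..K}. \<exists>B. (\<forall>i\<in>{1..k}. B i \<in> \<B>) \<and> nrm (prodAB A B k) \<le> q"
    and bounded: "\<And>A B k. k \<le> K \<Longrightarrow> \<forall>i\<in>{1..k}. A i \<in> \<A> \<and> B i \<in> \<B> \<Longrightarrow> nrm (prodAB A B k) \<le> D"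
    and A: "\<forall>n\<ge>1. A n \<in> \<A>"
  shows "\<exists>B. (\<forall>n\<ge>1. B n \<in> \<B>) \<and> (\<forall>n\<ge>1. nrm (prodAB A B n) \<le> D * D / q * root K q ^ n)"
proof -
  obtain pos B where pos: "pos 0 = 0" "\<And>j. pos j < pos (Suc j)" "\<And>j. pos (Suc j) \<le> pos j + K"
    and B: "\<forall>n\<ge>1. B n \<in> \<B>"
    and blocks: "\<And>j. nrm (prodAB (seq_shift A (pos j)) (seq_shift B (pos j)) (pos (Suc j) - pos j)) \<le> q"
  proof (rule prodAB_greedy_blocks[where A = A])
    show "\<exists>k\<in>{1..K}. \<exists>B. (\<forall>i\<in>{1..k}. B i \<in> \<B>) \<and> nrm (prodAB A' B k) \<le> q"
      if "\<forall>n\<ge>1. A' n \<in> \<A>" for A'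
      using that by (rule block)
    show "\<forall>n\<ge>1. A n \<in> \<A>" by (fact A)
  qed (rule that)
  have "nrm (prodAB (seq_shift A p) (seq_shift B p) r) \<le> D" if "r \<le> K" for p r
    using A B that by (intro bounded) (auto simp: seq_shift_def)
  with B show ?thesis
    using prodAB_decay_along_blocks[OF nonneg \<open>submultiplicative nrm\<close> \<open>0 < K\<close> \<open>0 < q\<close> \<open>q < 1\<close>
        pos blocks] by blast
qed

theorem theorem3:
  fixes \<A> :: "(real^'m^'n) set" and \<B> :: "(real^'n^'m) set"
    and nrm :: "real^'n^'n \<Rightarrow> real"
  assumes "finite \<A>" and "finite \<B>"
    and "is_matrix_norm nrm" and "submultiplicative nrm"
    and "\<forall>A. (\<forall>n\<ge>1. A n \<in> \<A>) \<longrightarrow>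
           (\<exists>k\<ge>1. \<exists>B. (\<forall>i\<in>{1..k}. B i \<in> \<B>) \<and> nrm (prodAB A B k) < 1)"
  shows "\<exists>C>0. \<exists>lam. 0 < lam \<and> lam < 1 \<and>
           (\<forall>A. (\<forall>n\<ge>1. A n \<in> \<A>) \<longrightarrow>
              (\<exists>B. (\<forall>n\<ge>1. B n \<in> \<B>) \<and> (\<forall>n\<ge>1. nrm (prodAB A B n) \<le> C * lam ^ n)))"
proof -
  obtain K q where "0 < K" "0 < q" "q < 1" and block:
    "\<And>A. \<forall>n\<ge>1. A n \<in> \<A> \<Longrightarrow> \<exists>k\<in>{1..K}. \<exists>B. (\<forall>i\<in>{1..k}. B i \<in> \<B>) \<and> nrm (prodAB A B k) \<le> q"
    using uniform_contracting_blocks[OF assms(1,2,5)] by metis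
  obtain D where "1 \<le> D" and bounded:
    "\<And>A B k. k \<le> K \<Longrightarrow> \<forall>i\<in>{1..k}. A i \<in> \<A> \<and> B i \<in> \<B> \<Longrightarrow> nrm (prodAB A B k) \<le> D"
    using prodAB_short_products_bounded[OF assms(1,2)] by metis
  have nonneg: "0 \<le> nrm X" for X
    using \<open>is_matrix_norm nrm\<close> by (simp add: is_matrix_norm_def)
  have "\<forall>A. (\<forall>n\<ge>1. A n \<in> \<A>) \<longrightarrow>
      (\<exists>B. (\<forall>n\<ge>1. B n \<in> \<B>) \<and> (\<forall>n\<ge>1. nrm (prodAB A B n) \<le> D * D / q * root K q ^ n))"
    using prodAB_exponential_decay[OF nonneg \<open>submultiplicative nrm\<close> \<open>0 < K\<close> \<open>0 < q\<close> \<open>q < 1\<close>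
        block bounded] by blast
  moreover have "0 < D * D / q" "0 < root K q" "root K q < 1"
    using \<open>1 \<le> D\<close> \<open>0 < K\<close> \<open>0 < q\<close> \<open>q < 1\<close> by simp_all
  ultimately show ?thesis by blast
qed

end
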